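(* For all integers $n\ge k\ge 2$ and $r\ge 0$, \[ \mathsf{opt}_{\operatorname{bandit}}^{\operatorname{det}}(n,k,r)\ge k(r+1)-1. \]
   Context: Prediction with expert advice: $\mathcal{Y}=\{1,\dots,k\}$, $\mathcal{X}=[k]^n$, experts $h_i(x)=x_i$, $i=1,\dots,n$. $\mathcal{P}_r$ is the set of finite sequences of examples in $\mathcal{X}\times\mathcal{Y}$ on which some $h_i$ errs on at most $r$ examples. Bandit feedback: each round the adversary presents $x_t$, a deterministic learner predicts $\hat y_t$ as a function of past observations and $x_t$, and learns only whether $\hat y_t$ equals the true label $y_t$. $\mathsf{opt}_{\operatorname{bandit}}^{\operatorname{det}}(n,k,r)$ is the infimum over deterministic learners of the supremum over $S\in\mathcal{P}_r$ of the number of mistakes ($\hat y_t\ne y_t$). *)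

theory Defs
  imports Main "HOL-Library.Extended_Nat"
begin

(* Instances x in [k]^n are lists of length n with entries in {1..k};
   expert i (for i < n) predicts x ! i. Labels are in {1..k}. *)
type_synonym inst = "nat list"
type_synonym example = "inst \<times> nat"

(* A history entry records the inst, the learner's prediction, and the
   bandit feedback bit (whether the prediction was correct). *)
type_synonym history = "(inst \<times> nat \<times> bool) list"

type_synonym learner = "history \<Rightarrow> inst \<Rightarrow> nat"

definition valid_learner :: "nat \<Rightarrow> learner \<Rightarrow> bool" where
  "valid_learner k L \<longleftrightarrow> (\<forall>h x. L h x \<in> {1..k})"

fun run_mistakes :: "learner \<Rightarrow> history \<Rightarrow> example list \<Rightarrow> nat" where
  "run_mistakes L h [] = 0"
| "run_mistakes L h ((x, y) # S) =
     (let p = L h x in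
       (if p \<noteq> y then 1 else 0) + run_mistakes L (h @ [(x, p, p = y)]) S)"

definition mistakes :: "learner \<Rightarrow> example list \<Rightarrow> nat" where
  "mistakes L S = run_mistakes L [] S"

definition valid_example :: "nat \<Rightarrow> nat \<Rightarrow> example \<Rightarrow> bool" where
  "valid_example n k e \<longleftrightarrow>
     length (fst e) = n \<and> set (fst e) \<subseteq> {1..k} \<and> snd e \<in> {1..k}"

definition expert_errors :: "nat \<Rightarrow> example list \<Rightarrow> nat" where
  "expert_errors i S = length (filter (\<lambda>(x, y). x ! i \<noteq> y) S)"

definition P_r :: "nat \<Rightarrow> nat \<Rightarrow> nat \<Rightarrow> example list set" where
  "P_r n k r = {S. (\<forall>e\<in>set S. valid_example n k e) \<and>
                   (\<exists>i<n. expert_errors i S \<le> r)}"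

definition opt_bandit_det :: "nat \<Rightarrow> nat \<Rightarrow> nat \<Rightarrow> enat" where
  "opt_bandit_det n k r =
     (INF L \<in> {L. valid_learner k L}. SUP S \<in> P_r n k r. enat (mistakes L S))"

end

theory Submission
  imports Defs
begin

text \<open>The adversary always presents the instance x = (1, 2, ..., k, 1, ..., 1) and always labels
it differently from the prediction. The learner then only ever receives negative feedback, so its
predictions form a fixed sequence, and it errs in every round. Among T = k(r+1) - 1 predictions some
label v in {1..k} occurs at most r times (pigeonhole). Choosing the true label to be v whenever the
prediction is not v, the expert predicting v errs only in the rounds where v was predicted, so the
sequence lies in the class with at most r errors of the best expert while the learner makes T
mistakes.\<close>

lemma pigeonhole_rare_value:
  assumes "finite A" "finite B" "f ` B \<subseteq> A" "card B < card A * (r + 1)"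
  shows "\<exists>v\<in>A. card {t\<in>B. f t = v} \<le> r"
proof (rule ccontr)
  assume "\<not> ?thesis"
  then have "(\<Sum>v\<in>A. r + 1) \<le> (\<Sum>v\<in>A. card {t\<in>B. f t = v})"
    by (intro sum_mono) (simp add: not_le Suc_le_eq)
  also have "\<dots> = card B"
    using sum.group[OF assms(2,1,3), of "\<lambda>_. 1 :: nat"] by simp
  finally show False
    using assms(4) by simp
qed

definition hard_instance :: "nat \<Rightarrow> nat \<Rightarrow> inst" where
  "hard_instance n k = map (\<lambda>i. if i < k then i + 1 else 1) [0..<n]"

lemma hard_instance_valid:
  assumes "1 \<le> k"
  shows "length (hard_instance n k) = n" "set (hard_instance n k) \<subseteq> {1..k}"
  using assms by (auto simp: hard_instance_def)

lemma hard_instance_nth: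
  assumes "v \<in> {1..k}" "k \<le> n"
  shows "hard_instance n k ! (v - 1) = v"
  using assms by (auto simp: hard_instance_def)

fun rejected_history :: "learner \<Rightarrow> inst \<Rightarrow> nat \<Rightarrow> history" where
  "rejected_history L x 0 = []"
| "rejected_history L x (Suc t) =
     rejected_history L x t @ [(x, L (rejected_history L x t) x, False)]"

lemma run_mistakes_rejected:
  assumes "\<And>t. y t \<noteq> L (rejected_history L x t) x"
  shows "run_mistakes L (rejected_history L x m) (map (\<lambda>t. (x, y t)) [m..<m + j]) = j"
proof (induction j arbitrary: m)
  case 0
  then show ?case by simp
next
  case (Suc j)
  have "[m..<m + Suc j] = m # [Suc m..<Suc m + j]"
    by (simp add: upt_conv_Cons)
  then show ?case
    using Suc.IH[of "Suc m"] assms[of m] by (simp add: Let_def del: upt_Suc)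
qed

lemma mistakes_rejected:
  assumes "\<And>t. y t \<noteq> L (rejected_history L x t) x"
  shows "mistakes L (map (\<lambda>t. (x, y t)) [0..<T]) = T"
  using run_mistakes_rejected[of y L x 0 T] assms by (simp add: mistakes_def)

lemma expert_errors_constant_instance:
  "expert_errors i (map (\<lambda>t. (x, y t)) [0..<T]) = card {t\<in>{..<T}. x ! i \<noteq> y t}"
proof -
  have "length (filter (\<lambda>t. x ! i \<noteq> y t) [0..<T]) = card {t\<in>{..<T}. x ! i \<noteq> y t}"
    by (auto simp: length_filter_conv_card intro!: arg_cong[where f = card])
  then show ?thesis
    by (simp add: expert_errors_def filter_map o_def)
qed

lemma adversary_forces_mistakes:
  assumes "valid_learner k L" "2 \<le> k" "k \<le> n"
  shows "\<exists>S\<in>P_r n k r. k * (r + 1) - 1 \<le> mistakes L S"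
proof -
  define T where "T = k * (r + 1) - 1"
  define x where "x = hard_instance n k"
  define p where "p = (\<lambda>t. L (rejected_history L x t) x)"
  have "p ` {..<T} \<subseteq> {1..k}"
    using assms(1) by (auto simp: p_def valid_learner_def)
  moreover have "card {..<T} < card {1..k} * (r + 1)"
    using assms(2) by (simp add: T_def)
  ultimately obtain v where v: "v \<in> {1..k}" and rare: "card {t\<in>{..<T}. p t = v} \<le> r"
    using pigeonhole_rare_value[of "{1..k}" "{..<T}" p r] by auto
  define y where "y = (\<lambda>t. if p t \<noteq> v then v else if v = 1 then 2 else 1)"
  define S where "S = map (\<lambda>t. (x, y t)) [0..<T]"
  have "mistakes L S = T"
    unfolding S_def by (rule mistakes_rejected) (auto simp: y_def p_def)
  moreover have "expert_errors (v - 1) S \<le> r"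
  proof -
    have "x ! (v - 1) = v"
      using hard_instance_nth[OF v assms(3)] by (simp add: x_def)
    then have "{t\<in>{..<T}. x ! (v - 1) \<noteq> y t} = {t\<in>{..<T}. p t = v}"
      by (auto simp: y_def)
    then show ?thesis
      using rare by (simp add: S_def expert_errors_constant_instance)
  qed
  moreover have "valid_example n k e" if "e \<in> set S" for e
    using that v assms(2) hard_instance_valid[of k n]
    by (auto simp: S_def valid_example_def y_def x_def)
  ultimately have "S \<in> P_r n k r" "T \<le> mistakes L S"
    using v assms(3) by (auto simp: P_r_def intro!: exI[of _ "v - 1"])
  then show ?thesis
    unfolding T_def by blast
qed

theorem lemma4p6:
  fixes n k r :: nat
  assumes "2 \<le> k" and "k \<le> n"
  shows "enat (k * (r + 1) - 1) \<le> opt_bandit_det n k r"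
  unfolding opt_bandit_det_def
proof (rule INF_greatest)
  fix L
  assume "L \<in> {L. valid_learner k L}"
  then obtain S where "S \<in> P_r n k r" "k * (r + 1) - 1 \<le> mistakes L S"
    using adversary_forces_mistakes assms by blast
  then show "enat (k * (r + 1) - 1) \<le> (SUP S\<in>P_r n k r. enat (mistakes L S))"
    by (meson SUP_upper2 enat_ord_simps(1))
qed

end
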